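(* Let $s$ be a term that reduces to an abstraction $t$ by a reduction sequence $s=s_0\succ\cdots\succ s_j=t$ whose largest term has size $m=\max_i|s_i|$. Then there are a program $P$ and a number $m'$ with $P\gg t$ and $m\le m'\le 2m$ such that the substitution machine reduces $\tau_s$ to $([],[P])$ by a sequence of steps whose largest state has size $m'$.
   Context: Terms (de Bruijn): $s::=n\mid st\mid\lambda s$, size $|n|=1+n$, $|\lambda s|=1+|s|$, $|st|=1+|s|+|t|$. Term substitution: $k^k_u=u$, $n^k_u=n$ ($n\ne k$), $(st)^k_u=(s^k_u)(t^k_u)$, $(\lambda s)^k_u=\lambda(s^{k+1}_u)$. Reduction $\succ$: $(\lambda s)(\lambda t)\succ s^0_{\lambda t}$; $s\succ s'\Rightarrow st\succ s't$; $t\succ t'\Rightarrow(\lambda s)t\succ(\lambda s)t'$. Programs are lists of commands $\mathsf{ret},\mathsf{var}\,n,\mathsf{lam},\mathsf{app}$ with sizes $|\mathsf{var}\,n|=1+n$, $|c|=1$ otherwise, $|P|=1+\sum_{c\in P}|c|$. Compilation: $\gamma n=[\mathsf{var}\,n]$, $\gamma(st)=\gamma s++\gamma t++[\mathsf{app}]$, $\gamma(\lambda s)=\mathsf{lam}::\gamma s++[\mathsf{ret}]$. $P\gg s$ iff $P=\gamma u$ and $s=\lambda u$ for some $u$. $\varphi P:=\varphi_{0,[]}P$ with $\varphi_{0,Q}(\mathsf{ret}::P)=(Q,P)$, $\varphi_{k+1,Q}(\mathsf{ret}::P)=\varphi_{k,Q++[\mathsf{ret}]}P$, $\varphi_{k,Q}(\mathsf{lam}::P)=\varphi_{k+1,Q++[\mathsf{lam}]}P$,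 $\varphi_{k,Q}(c::P)=\varphi_{k,Q++[c]}P$ for $c$ a $\mathsf{var}$ or $\mathsf{app}$, undefined otherwise. Program substitution: $(\mathsf{var}\,k::P)^k_Q=Q++P^k_Q$; $(\mathsf{var}\,n::P)^k_Q=\mathsf{var}\,n::P^k_Q$ ($n\ne k$); $(\mathsf{lam}::P)^k_Q=\mathsf{lam}::P^{k+1}_Q$; $(\mathsf{app}::P)^k_Q=\mathsf{app}::P^k_Q$; $(\mathsf{ret}::P)^0_Q=[\mathsf{ret}]$; $(\mathsf{ret}::P)^{k+1}_Q=\mathsf{ret}::P^k_Q$; $[]^k_Q=[]$. The substitution machine has states $(T,V)$ ($T,V$ lists of programs) and steps: $((\mathsf{lam}::P)::T,V)\succ(P'::_{tc}T,\ Q::V)$ if $\varphi P=(Q,P')$; $((\mathsf{app}::P)::T,\ Q::R::V)\succ(R^0_{\mathsf{lam}::Q++[\mathsf{ret}]}::(P::_{tc}T),\ V)$; where $P::_{tc}T:=T$ if $P=[]$, else $P::T$. Initial state $\tau_s:=([\gamma s],[])$. The size of a state $(T,V)$ is the sum of the sizes of all programs in $T$ and in $V$. *)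

theory Defs
  imports Main
begin

datatype tm = TVar nat | TApp tm tm | TLam tm

fun tsize :: "tm \<Rightarrow> nat" where
  "tsize (TVar n) = 1 + n"
| "tsize (TLam s) = 1 + tsize s"
| "tsize (TApp s t) = 1 + tsize s + tsize t"

fun tsubst :: "tm \<Rightarrow> nat \<Rightarrow> tm \<Rightarrow> tm" where
  "tsubst (TVar n) k u = (if n = k then u else TVar n)"
| "tsubst (TApp s t) k u = TApp (tsubst s k u) (tsubst t k u)"
| "tsubst (TLam s) k u = TLam (tsubst s (Suc k) u)"

inductive red :: "tm \<Rightarrow> tm \<Rightarrow> bool" where
  beta: "red (TApp (TLam s) (TLam t)) (tsubst s 0 (TLam t))"
| appL: "red s s' \<Longrightarrow> red (TApp s t) (TApp s' t)"
| appR: "red t t' \<Longrightarrow> red (TApp (TLam s) t) (TApp (TLam s) t')"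

datatype cmd = CRet | CVar nat | CLam | CApp

type_synonym prog = "cmd list"

fun csize :: "cmd \<Rightarrow> nat" where
  "csize (CVar n) = 1 + n"
| "csize CRet = 1"
| "csize CLam = 1"
| "csize CApp = 1"

definition psize :: "prog \<Rightarrow> nat" where
  "psize P = 1 + sum_list (map csize P)"

fun gamma :: "tm \<Rightarrow> prog" where
  "gamma (TVar n) = [CVar n]"
| "gamma (TApp s t) = gamma s @ gamma t @ [CApp]"
| "gamma (TLam s) = CLam # gamma s @ [CRet]"

definition represents :: "prog \<Rightarrow> tm \<Rightarrow> bool" where
  "represents P s \<longleftrightarrow> (\<exists>u. P = gamma u \<and> s = TLam u)"

fun phi_aux :: "nat \<Rightarrow> prog \<Rightarrow> prog \<Rightarrow> (prog \<times> prog) option" where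
  "phi_aux 0 Q (CRet # P) = Some (Q, P)"
| "phi_aux (Suc k) Q (CRet # P) = phi_aux k (Q @ [CRet]) P"
| "phi_aux k Q (CLam # P) = phi_aux (Suc k) (Q @ [CLam]) P"
| "phi_aux k Q (CVar n # P) = phi_aux k (Q @ [CVar n]) P"
| "phi_aux k Q (CApp # P) = phi_aux k (Q @ [CApp]) P"
| "phi_aux k Q [] = None"

definition phi :: "prog \<Rightarrow> (prog \<times> prog) option" where
  "phi P = phi_aux 0 [] P"

fun psubst :: "prog \<Rightarrow> nat \<Rightarrow> prog \<Rightarrow> prog" where
  "psubst (CVar n # P) k Q = (if n = k then Q @ psubst P k Q else CVar n # psubst P k Q)"
| "psubst (CLam # P) k Q = CLam # psubst P (Suc k) Q"
| "psubst (CApp # P) k Q = CApp # psubst P k Q"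
| "psubst (CRet # P) 0 Q = [CRet]"
| "psubst (CRet # P) (Suc k) Q = CRet # psubst P k Q"
| "psubst [] k Q = []"

definition cons_tc :: "prog \<Rightarrow> prog list \<Rightarrow> prog list" where
  "cons_tc P T = (if P = [] then T else P # T)"

type_synonym state = "prog list \<times> prog list"

inductive mstep :: "state \<Rightarrow> state \<Rightarrow> bool" where
  lam: "phi P = Some (Q, P') \<Longrightarrow> mstep ((CLam # P) # T, V) (cons_tc P' T, Q # V)"
| app: "mstep ((CApp # P) # T, Q # R # V)
          (psubst R 0 (CLam # Q @ [CRet]) # cons_tc P T, V)"

definition init_state :: "tm \<Rightarrow> state" where
  "init_state s = ([gamma s], [])"

definition ssize :: "state \<Rightarrow> nat" where
  "ssize st = sum_list (map psize (fst st)) + sum_list (map psize (snd st))"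

definition is_seq :: "('a \<Rightarrow> 'a \<Rightarrow> bool) \<Rightarrow> 'a list \<Rightarrow> bool" where
  "is_seq r xs \<longleftrightarrow> xs \<noteq> [] \<and> (\<forall>i. Suc i < length xs \<longrightarrow> r (xs ! i) (xs ! Suc i))"

end

theory Submission
  imports Defs
begin

(* A machine state is read as a postfix program over a stack of terms: the task programs,
   concatenated, are a sequence of tokens (variables, applications, and whole compiled
   abstractions), and a value program Q stands for the abstraction whose body compiles to Q.
   Evaluating the tokens on the value stack yields the term the state decodes to.  A lam step
   only moves an abstraction from the tasks to the values, so the decoded term is unchanged
   while the tasks shrink; an app step contracts a beta-redex sitting in an evaluation context
   of the decoded term, which is exactly the reduction step the term takes.  So the run of the
   machine from the initial state passes through states decoding to each term of the reduction
   sequence in turn.  The size bounds hold state by state: every token contributes its term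
   size, and compilation at most doubles it because a term has fewer abstractions than its
   size. *)

lemma is_seq_Cons: "is_seq r (x # xs) \<longleftrightarrow> xs = [] \<or> r x (hd xs) \<and> is_seq r xs"
proof (cases xs)
  case (Cons y ys)
  have "(\<forall>i. Suc i < length (x # xs) \<longrightarrow> r ((x # xs) ! i) ((x # xs) ! Suc i)) \<longleftrightarrow>
        r x y \<and> (\<forall>i. Suc i < length xs \<longrightarrow> r (xs ! i) (xs ! Suc i))"
    using Cons by (auto simp: All_less_Suc2)
  then show ?thesis
    using Cons by (simp add: is_seq_def)
qed (simp add: is_seq_def)

lemma is_seq_append:
  "is_seq r xs \<Longrightarrow> is_seq r ys \<Longrightarrow> r (last xs) (hd ys) \<Longrightarrow> is_seq r (xs @ ys)"
proof (induction xs)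
  case (Cons x xs)
  have "ys \<noteq> []"
    using Cons.prems(2) by (simp add: is_seq_def)
  with Cons show ?case
    by (cases "xs = []") (auto simp: is_seq_Cons)
qed (simp add: is_seq_def)

lemma Max_image_le_Max_image:
  fixes f :: "'a \<Rightarrow> 'c::linorder" and g :: "'b \<Rightarrow> 'c"
  assumes "finite A" "A \<noteq> {}" "finite B" and "\<forall>a\<in>A. \<exists>b\<in>B. f a \<le> g b"
  shows "Max (f ` A) \<le> Max (g ` B)"
proof (subst Max_le_iff)
  show "\<forall>y\<in>f ` A. y \<le> Max (g ` B)"
    using assms(3,4) by (fastforce intro: order_trans[OF _ Max_ge])
qed (use assms(1,2) in auto)

datatype tok = TkVar nat | TkLam tm | TkApp

fun code :: "tok list \<Rightarrow> prog" where
  "code [] = []"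
| "code (TkVar n # r) = CVar n # code r"
| "code (TkLam u # r) = CLam # gamma u @ CRet # code r"
| "code (TkApp # r) = CApp # code r"

fun toks :: "tm \<Rightarrow> tok list" where
  "toks (TVar n) = [TkVar n]"
| "toks (TLam u) = [TkLam u]"
| "toks (TApp a b) = toks a @ toks b @ [TkApp]"

fun postfix_eval :: "tok list \<Rightarrow> tm list \<Rightarrow> tm list option" where
  "postfix_eval [] S = Some S"
| "postfix_eval (TkVar n # r) S = postfix_eval r (TVar n # S)"
| "postfix_eval (TkLam u # r) S = postfix_eval r (TLam u # S)"
| "postfix_eval (TkApp # r) (b # a # S) = postfix_eval r (TApp a b # S)"
| "postfix_eval (TkApp # r) S = None"

lemma code_append: "code (r @ r') = code r @ code r'"
  by (induction r rule: code.induct) auto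

lemma code_toks: "code (toks u) = gamma u"
  by (induction u) (auto simp: code_append)

lemma code_eq_Nil_iff: "code r = [] \<longleftrightarrow> r = []"
  by (cases r rule: code.cases) auto

lemma toks_neq_Nil: "toks u \<noteq> []"
  by (induction u) auto

lemma postfix_eval_toks: "postfix_eval (toks u @ r) S = postfix_eval r (u # S)"
  by (induction u arbitrary: r S) auto

lemma code_eq_CLam_Cons:
  "code r = CLam # P \<Longrightarrow> \<exists>u r'. r = TkLam u # r' \<and> P = gamma u @ CRet # code r'"
  by (cases r rule: code.cases) auto

lemma code_eq_CApp_Cons: "code r = CApp # P \<Longrightarrow> \<exists>r'. r = TkApp # r' \<and> P = code r'"
  by (cases r rule: code.cases) auto

lemma phi_aux_gamma_append: "phi_aux k Q (gamma u @ P) = phi_aux k (Q @ gamma u) P"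
  by (induction u arbitrary: k Q P) auto

lemma phi_gamma_CRet: "phi (gamma u @ CRet # P) = Some (gamma u, P)"
  by (simp add: phi_def phi_aux_gamma_append)

lemma psubst_gamma_append:
  "psubst (gamma u @ P) k (gamma (TLam q)) = gamma (tsubst u k (TLam q)) @ psubst P k (gamma (TLam q))"
  by (induction u arbitrary: k P) auto

lemma psubst_gamma:
  "psubst (gamma u) 0 (CLam # gamma q @ [CRet]) = gamma (tsubst u 0 (TLam q))"
  using psubst_gamma_append[of u "[]" 0 q] by simp

datatype ectx = CtxHole | CtxAppL ectx tm | CtxAppR tm ectx

fun plug :: "ectx \<Rightarrow> tm \<Rightarrow> tm" where
  "plug CtxHole x = x"
| "plug (CtxAppL E t) x = TApp (plug E x) t"
| "plug (CtxAppR a E) x = TApp (TLam a) (plug E x)"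

lemma red_plug: "red x y \<Longrightarrow> red (plug E x) (plug E y)"
  by (induction E) (auto intro: red.intros)

lemma plug_TVar_neq_TLam: "plug E (TVar n) \<noteq> TLam a"
  by (cases E) auto

lemma TLam_irreducible: "\<not> red (TLam a) y"
  by (auto elim: red.cases)

lemma plug_TVar_irreducible: "\<not> red (plug E (TVar n)) y"
proof
  assume "red (plug E (TVar n)) y"
  then show False
  proof (induction E arbitrary: y)
    case CtxHole
    then show ?case
      by (cases rule: red.cases) auto
  next
    case (CtxAppL E t)
    from CtxAppL.prems show ?case
      by (cases rule: red.cases) (use CtxAppL.IH plug_TVar_neq_TLam in auto)
  next
    case (CtxAppR a E)
    from CtxAppR.prems show ?case
      by (cases rule: red.cases) (use CtxAppR.IH plug_TVar_neq_TLam TLam_irreducible in auto)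
  qed
qed

lemma red_deterministic: "red x y \<Longrightarrow> red x z \<Longrightarrow> y = z"
proof (induction arbitrary: z rule: red.induct)
  case (beta s t)
  from beta.prems show ?case
    by (cases rule: red.cases) (auto simp: TLam_irreducible)
next
  case (appL s s' t)
  from appL.prems show ?case
  proof (cases rule: red.cases)
    case appL
    then show ?thesis
      using appL.IH by auto
  qed (use appL.hyps TLam_irreducible in auto)
next
  case (appR t t' s)
  from appR.prems show ?case
  proof (cases rule: red.cases)
    case appR
    then show ?thesis
      using appR.IH by auto
  qed (use appR.hyps TLam_irreducible in auto)
qed

text \<open>The hole can end up as the right operand of an application only if the left operand
  is already an abstraction, which is why the part of the stack below the hole has to consist
  of abstractions.\<close>

lemma postfix_eval_plug:
  assumes "postfix_eval r (A @ plug E x # S) = Some R" and "set S \<subseteq> range TLam"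
  shows "\<exists>A' E' S'. R = A' @ plug E' x # S' \<and> set S' \<subseteq> range TLam \<and>
           (\<forall>x'. postfix_eval r (A @ plug E x' # S) = Some (A' @ plug E' x' # S'))"
  using assms
proof (induction r arbitrary: A E S)
  case Nil
  then show ?case
    by auto
next
  case (Cons k r)
  show ?case
  proof (cases k)
    case (TkVar n)
    with Cons.prems Cons.IH[of "TVar n # A"] show ?thesis
      by simp
  next
    case (TkLam u)
    with Cons.prems Cons.IH[of "TLam u # A"] show ?thesis
      by simp
  next
    case TkApp
    consider (hole_top) "A = []" | (hole_second) b where "A = [b]"
      | (hole_below) b c A0 where "A = b # c # A0"
      by (metis list.exhaust)
    then show ?thesis
    proof cases
      case hole_top
      with Cons.prems TkApp obtain a S0 where S: "S = TLam a # S0"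
        by (cases S) auto
      with Cons.prems hole_top TkApp Cons.IH[of "[]" "CtxAppR a E" S0] show ?thesis
        by simp
    next
      case hole_second
      with Cons.prems TkApp Cons.IH[of "[]" "CtxAppL E b" S] show ?thesis
        by simp
    next
      case hole_below
      with Cons.prems TkApp Cons.IH[of "TApp c b # A0" E S] show ?thesis
        by simp
    qed
  qed
qed

definition decodes :: "tm \<Rightarrow> state \<Rightarrow> bool" where
  "decodes x st \<longleftrightarrow> (\<exists>TT VV. st = (map code TT, map gamma VV) \<and> [] \<notin> set TT \<and>
     postfix_eval (concat TT) (map TLam VV) = Some [x])"

definition task_length :: "state \<Rightarrow> nat" where
  "task_length st = length (concat (fst st))"

lemma decodes_init_state: "decodes s (init_state s)"
  unfolding decodes_def init_state_def
  using postfix_eval_toks[of s "[]" "[]"]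
  by (intro exI[of _ "[toks s]"] exI[of _ "[]"]) (simp add: code_toks toks_neq_Nil[symmetric])

lemma decodes_final: "decodes x ([], V) \<Longrightarrow> \<exists>v. V = [gamma v] \<and> x = TLam v"
  unfolding decodes_def by auto

lemma decodes_mstep_lam:
  assumes "decodes x ((CLam # P) # T, V)" and "phi P = Some (Q, P')"
  shows "decodes x (cons_tc P' T, Q # V) \<and>
    task_length (cons_tc P' T, Q # V) < task_length ((CLam # P) # T, V)"
proof -
  from assms(1) obtain r0 TT VV where r0: "code r0 = CLam # P" and T: "T = map code TT"
    and V: "V = map gamma VV" and ne: "[] \<notin> set TT"
    and ev: "postfix_eval (r0 @ concat TT) (map TLam VV) = Some [x]"
    unfolding decodes_def by (auto simp: Cons_eq_map_conv)
  from code_eq_CLam_Cons[OF r0] obtain u r where u: "r0 = TkLam u # r"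
    and P: "P = gamma u @ CRet # code r"
    by blast
  with assms(2) have Q: "Q = gamma u" and P': "P' = code r"
    by (simp_all add: phi_gamma_CRet)
  define TT' where "TT' = (if r = [] then TT else r # TT)"
  have "cons_tc P' T = map code TT'"
    using P' T by (simp add: TT'_def cons_tc_def code_eq_Nil_iff)
  moreover have "postfix_eval (concat TT') (map TLam (u # VV)) = Some [x]"
    using ev u by (auto simp: TT'_def)
  ultimately have "decodes x (cons_tc P' T, Q # V)"
    unfolding decodes_def using Q V ne by (intro exI[of _ TT'] exI[of _ "u # VV"]) (simp add: TT'_def)
  moreover have "length (concat (cons_tc P' T)) < length (concat ((CLam # P) # T))"
    using P P' by (simp add: cons_tc_def)
  ultimately show ?thesis
    by (simp add: task_length_def)
qed

lemma decodes_mstep_app: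
  assumes "decodes x ((CApp # P) # T, Q # R # V)"
  shows "\<exists>y. red x y \<and> decodes y (psubst R 0 (CLam # Q @ [CRet]) # cons_tc P T, V)"
proof -
  from assms obtain r0 TT a b VV where r0: "code r0 = CApp # P" and T: "T = map code TT"
    and Q: "Q = gamma b" and R: "R = gamma a" and V: "V = map gamma VV" and ne: "[] \<notin> set TT"
    and ev: "postfix_eval (r0 @ concat TT) (TLam b # TLam a # map TLam VV) = Some [x]"
    unfolding decodes_def by (auto simp: Cons_eq_map_conv)
  from code_eq_CApp_Cons[OF r0] obtain r where r: "r0 = TkApp # r" and P: "P = code r"
    by blast
  let ?redex = "TApp (TLam a) (TLam b)"
  have "postfix_eval (r @ concat TT) ([] @ plug CtxHole ?redex # map TLam VV) = Some [x]"
    using ev r by simp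
  moreover have "set (map TLam VV) \<subseteq> range TLam"
    by auto
  ultimately obtain A' E' S' where "[x] = A' @ plug E' ?redex # S'"
    and plug_any: "\<forall>x'. postfix_eval (r @ concat TT) ([] @ plug CtxHole x' # map TLam VV)
                          = Some (A' @ plug E' x' # S')"
    by (blast dest: postfix_eval_plug)
  then have x: "x = plug E' ?redex" and "A' = []" "S' = []"
    by (auto simp: Cons_eq_append_conv)
  define c where "c = tsubst a 0 (TLam b)"
  define TT' where "TT' = toks c # (if r = [] then TT else r # TT)"
  have "psubst R 0 (CLam # Q @ [CRet]) # cons_tc P T = map code TT'"
    using P T Q R by (simp add: TT'_def cons_tc_def code_eq_Nil_iff code_toks psubst_gamma c_def)
  moreover have "postfix_eval (concat TT') (map TLam VV) = Some [plug E' c]"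
    using plug_any \<open>A' = []\<close> \<open>S' = []\<close> by (auto simp: TT'_def postfix_eval_toks)
  ultimately have "decodes (plug E' c) (psubst R 0 (CLam # Q @ [CRet]) # cons_tc P T, V)"
    unfolding decodes_def using V ne
    by (intro exI[of _ TT'] exI[of _ VV]) (simp add: TT'_def toks_neq_Nil[symmetric])
  moreover have "red x (plug E' c)"
    unfolding x c_def by (intro red_plug red.beta)
  ultimately show ?thesis
    by blast
qed

lemma decodes_mstep:
  assumes "decodes x st" and "mstep st st'"
  shows "decodes x st' \<and> task_length st' < task_length st \<or> (\<exists>y. red x y \<and> decodes y st')"
  using assms(2,1) by cases (use decodes_mstep_lam decodes_mstep_app in blast)+

lemma decodes_progress:
  assumes "decodes x st" and "fst st \<noteq> []"
  shows "(\<exists>st'. mstep st st') \<or> (\<exists>E n. x = plug E (TVar n))"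
proof -
  from assms obtain k r TT VV where st: "st = (code (k # r) # map code TT, map gamma VV)"
    and ev: "postfix_eval (k # r @ concat TT) (map TLam VV) = Some [x]"
    unfolding decodes_def by (auto simp: neq_Nil_conv) (metis append_Cons list.exhaust)
  show ?thesis
  proof (cases k)
    case (TkVar n)
    have "postfix_eval (r @ concat TT) ([] @ plug CtxHole (TVar n) # map TLam VV) = Some [x]"
      using ev TkVar by simp
    moreover have "set (map TLam VV) \<subseteq> range TLam"
      by auto
    ultimately obtain A' E' S' where "[x] = A' @ plug E' (TVar n) # S'"
      by (blast dest: postfix_eval_plug)
    then show ?thesis
      by (auto simp: Cons_eq_append_conv)
  next
    case (TkLam u)
    have "mstep ((CLam # gamma u @ CRet # code r) # map code TT, map gamma VV)
        (cons_tc (code r) (map code TT), gamma u # map gamma VV)"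
      by (intro mstep.lam phi_gamma_CRet)
    then show ?thesis
      using st TkLam by auto
  next
    case TkApp
    with ev obtain b a VV' where "VV = b # a # VV'"
      by (cases VV; cases "tl VV") auto
    then show ?thesis
      using st TkApp mstep.app by fastforce
  qed
qed

lemma decodes_run_to_contraction:
  assumes "decodes x st" and "(\<exists>y. red x y) \<or> (\<exists>v. x = TLam v)"
  shows "\<exists>sts. is_seq mstep sts \<and> hd sts = st \<and> (\<forall>st'\<in>set sts. decodes x st') \<and>
    ((\<exists>v. x = TLam v \<and> last sts = ([], [gamma v])) \<or>
     (\<exists>y st'. red x y \<and> mstep (last sts) st' \<and> decodes y st'))"
  using assms(1)
proof (induction "task_length st" arbitrary: st rule: less_induct)
  case less
  show ?case
  proof (cases "fst st = []")
    case True
    with less.prems decodes_final obtain v where "st = ([], [gamma v])" and "x = TLam v"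
      by (metis prod.collapse)
    with less.prems show ?thesis
      by (intro exI[of _ "[st]"]) (simp add: is_seq_def)
  next
    case False
    have "\<nexists>E n. x = plug E (TVar n)"
      using assms(2) plug_TVar_irreducible plug_TVar_neq_TLam by metis
    with decodes_progress[OF less.prems False] obtain st' where step: "mstep st st'"
      by blast
    from decodes_mstep[OF less.prems step] show ?thesis
    proof
      assume "decodes x st' \<and> task_length st' < task_length st"
      with less.hyps obtain sts where "is_seq mstep sts" "hd sts = st'"
        "\<forall>st'\<in>set sts. decodes x st'"
        "(\<exists>v. x = TLam v \<and> last sts = ([], [gamma v])) \<or>
         (\<exists>y st'. red x y \<and> mstep (last sts) st' \<and> decodes y st')"
        by blast
      moreover from this have "sts \<noteq> []"
        by (simp add: is_seq_def)
      ultimately show ?thesis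
        using step less.prems by (intro exI[of _ "st # sts"]) (simp add: is_seq_Cons)
    next
      assume "\<exists>y. red x y \<and> decodes y st'"
      with step have "\<exists>y st'. red x y \<and> mstep (last [st]) st' \<and> decodes y st'"
        by (metis last_ConsL)
      with less.prems show ?thesis
        by (intro exI[of _ "[st]"]) (simp add: is_seq_def)
    qed
  qed
qed

lemma decodes_run:
  assumes "is_seq red ss" and "last ss = TLam u" and "decodes (hd ss) st"
  shows "\<exists>sts. is_seq mstep sts \<and> hd sts = st \<and> last sts = ([], [gamma u]) \<and>
    (\<forall>st'\<in>set sts. \<exists>x\<in>set ss. decodes x st') \<and> (\<forall>x\<in>set ss. \<exists>st'\<in>set sts. decodes x st')"
  using assms
proof (induction ss arbitrary: st)
  case Nil
  then show ?case
    by (simp add: is_seq_def)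
next
  case (Cons x xs)
  show ?case
  proof (cases xs)
    case Nil
    with Cons.prems have "decodes x st" and x: "x = TLam u"
      by simp_all
    from decodes_run_to_contraction[OF this(1)] x TLam_irreducible obtain sts
      where "is_seq mstep sts" "hd sts = st" "\<forall>st'\<in>set sts. decodes x st'"
        "last sts = ([], [gamma u])"
      by blast
    moreover from this have "sts \<noteq> []"
      by (simp add: is_seq_def)
    ultimately show ?thesis
      using Nil by (intro exI[of _ sts]) (auto, metis hd_in_set prod.collapse)
  next
    case (Cons y ys)
    with Cons.prems have "red x y" and "is_seq red xs"
      by (simp_all add: is_seq_Cons)
    from decodes_run_to_contraction[of x st] Cons.prems \<open>red x y\<close> TLam_irreducible obtain sts y' st'
      where sts: "is_seq mstep sts" "hd sts = st" "\<forall>st'\<in>set sts. decodes x st'"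
        and "red x y'" and step: "mstep (last sts) st'" and "decodes y' st'"
      by fastforce
    with \<open>red x y\<close> have "decodes (hd xs) st'"
      using Cons red_deterministic by auto
    moreover have "last xs = TLam u"
      using Cons.prems(2) Cons by simp
    ultimately obtain sts' where
      sts': "is_seq mstep sts'" "hd sts' = st'" "last sts' = ([], [gamma u])"
        "\<forall>st'\<in>set sts'. \<exists>x\<in>set xs. decodes x st'" "\<forall>x\<in>set xs. \<exists>st'\<in>set sts'. decodes x st'"
      using Cons.IH \<open>is_seq red xs\<close> by blast
    have "sts \<noteq> []" "sts' \<noteq> []"
      using sts(1) sts'(1) by (simp_all add: is_seq_def)
    with sts(2) have "st \<in> set sts"
      by auto
    with \<open>sts \<noteq> []\<close> \<open>sts' \<noteq> []\<close> show ?thesis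
      using sts sts' step is_seq_append[OF sts(1) sts'(1)] Cons.prems(3)
      by (intro exI[of _ "sts @ sts'"]) auto
  qed
qed

fun lam_count :: "tm \<Rightarrow> nat" where
  "lam_count (TVar n) = 0"
| "lam_count (TApp a b) = lam_count a + lam_count b"
| "lam_count (TLam u) = Suc (lam_count u)"

fun tok_size :: "tok \<Rightarrow> nat" where
  "tok_size (TkVar n) = tsize (TVar n)"
| "tok_size (TkLam u) = tsize (TLam u)"
| "tok_size TkApp = 1"

fun tok_lam_count :: "tok \<Rightarrow> nat" where
  "tok_lam_count (TkLam u) = lam_count (TLam u)"
| "tok_lam_count _ = 0"

lemma lam_count_less_tsize: "lam_count u < tsize u"
  by (induction u) auto

lemma tok_lam_count_less_tok_size: "tok_lam_count k < tok_size k"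
  using lam_count_less_tsize by (cases k) auto

lemma sum_csize_gamma: "(\<Sum>c\<leftarrow>gamma u. csize c) = tsize u + lam_count u"
  by (induction u) auto

lemma sum_csize_code:
  "(\<Sum>c\<leftarrow>code r. csize c) = (\<Sum>k\<leftarrow>r. tok_size k) + (\<Sum>k\<leftarrow>r. tok_lam_count k)"
  by (induction r rule: code.induct) (auto simp: sum_csize_gamma)

lemma psize_gamma_bounds:
  "tsize (TLam u) \<le> psize (gamma u) \<and> psize (gamma u) \<le> 2 * tsize (TLam u)"
  using lam_count_less_tsize[of u] by (simp add: psize_def sum_csize_gamma)

text \<open>The extra 1 in \<open>psize\<close> is absorbed by the first token, so \<open>r\<close> must not be empty.\<close>

lemma psize_code_bounds:
  assumes "r \<noteq> []"
  shows "(\<Sum>k\<leftarrow>r. tok_size k) \<le> psize (code r) \<and> psize (code r) \<le> 2 * (\<Sum>k\<leftarrow>r. tok_size k)"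
proof -
  have "(\<Sum>k\<leftarrow>r. tok_lam_count k) + length r \<le> (\<Sum>k\<leftarrow>r. tok_size k)"
  proof (induction r)
    case (Cons k r)
    then show ?case
      using tok_lam_count_less_tok_size[of k] by simp
  qed simp
  moreover have "1 \<le> length r"
    using assms by (simp add: Suc_leI)
  ultimately show ?thesis
    by (simp add: psize_def sum_csize_code)
qed

lemma postfix_eval_tsize:
  "postfix_eval r S = Some R \<Longrightarrow> (\<Sum>x\<leftarrow>R. tsize x) = (\<Sum>x\<leftarrow>S. tsize x) + (\<Sum>k\<leftarrow>r. tok_size k)"
  by (induction r S rule: postfix_eval.induct) auto

lemma decodes_ssize:
  assumes "decodes x st"
  shows "tsize x \<le> ssize st \<and> ssize st \<le> 2 * tsize x"
proof -
  from assms obtain TT VV where st: "st = (map code TT, map gamma VV)" and ne: "[] \<notin> set TT"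
    and ev: "postfix_eval (concat TT) (map TLam VV) = Some [x]"
    unfolding decodes_def by blast
  let ?tasks = "\<Sum>r\<leftarrow>TT. \<Sum>k\<leftarrow>r. tok_size k" and ?values = "\<Sum>v\<leftarrow>VV. tsize (TLam v)"
  have "(\<Sum>k\<leftarrow>concat TT. tok_size k) = ?tasks"
    by (induction TT) auto
  with postfix_eval_tsize[OF ev] have x: "tsize x = ?values + ?tasks"
    by (simp add: comp_def)
  have "?tasks \<le> (\<Sum>r\<leftarrow>TT. psize (code r))"
    using ne by (intro sum_list_mono) (metis psize_code_bounds)
  moreover have "(\<Sum>r\<leftarrow>TT. psize (code r)) \<le> (\<Sum>r\<leftarrow>TT. 2 * (\<Sum>k\<leftarrow>r. tok_size k))"
    using ne by (intro sum_list_mono) (metis psize_code_bounds)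
  moreover have "?values \<le> (\<Sum>v\<leftarrow>VV. psize (gamma v))"
    by (intro sum_list_mono) (rule psize_gamma_bounds[THEN conjunct1])
  moreover have "(\<Sum>v\<leftarrow>VV. psize (gamma v)) \<le> (\<Sum>v\<leftarrow>VV. 2 * tsize (TLam v))"
    by (intro sum_list_mono) (rule psize_gamma_bounds[THEN conjunct2])
  ultimately show ?thesis
    unfolding x st ssize_def sum_list_const_mult by (simp add: comp_def)
qed

theorem theorem15:
  fixes s t :: tm and ss :: "tm list" and m :: nat
  assumes "is_seq red ss"
    and "hd ss = s" and "last ss = t"
    and "\<exists>u. t = TLam u"
    and "m = Max (tsize ` set ss)"
  shows "\<exists>P m' sts. represents P t \<and> m \<le> m' \<and> m' \<le> 2 * m
           \<and> is_seq mstep sts \<and> hd sts = init_state s \<and> last sts = ([], [P])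
           \<and> m' = Max (ssize ` set sts)"
proof -
  obtain u where t: "t = TLam u"
    using assms(4) by blast
  have "decodes (hd ss) (init_state s)"
    using assms(2) decodes_init_state by simp
  with decodes_run[OF assms(1)] assms(3) t obtain sts where
    run: "is_seq mstep sts" "hd sts = init_state s" "last sts = ([], [gamma u])"
    and sts_ss: "\<forall>st\<in>set sts. \<exists>x\<in>set ss. decodes x st"
    and ss_sts: "\<forall>x\<in>set ss. \<exists>st\<in>set sts. decodes x st"
    by blast
  have fin: "finite (set ss)" "set ss \<noteq> {}" "finite (set sts)" "set sts \<noteq> {}"
    using assms(1) run(1) by (simp_all add: is_seq_def)
  have "m \<le> Max (ssize ` set sts)"
    unfolding assms(5) using fin ss_sts by (intro Max_image_le_Max_image) (meson decodes_ssize)+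
  moreover have "Max (ssize ` set sts) \<le> Max ((\<lambda>x. 2 * tsize x) ` set ss)"
    using fin sts_ss by (intro Max_image_le_Max_image) (meson decodes_ssize)+
  moreover have "Max ((\<lambda>x. 2 * tsize x) ` set ss) = 2 * m"
    using mono_Max_commute[of "(*) 2" "tsize ` set ss"] fin
    unfolding assms(5) by (simp add: image_image mono_def)
  ultimately show ?thesis
    using run t by (intro exI[of _ "gamma u"] exI[of _ "Max (ssize ` set sts)"] exI[of _ sts])
      (simp add: represents_def)
qed

end
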